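(* Let $T=(V,E)$ be a tree rooted at $r$, $w:V\to\mathbb R_{\ge0}$, and $C$ a partial coloring with domain $\mathrm{support}(w)=\{v:w(v)>0\}$. Assume: (i) there are no $x,y,z\in\mathrm{support}(w)$ with $y$ on the path from $x$ to $z$ and $C(x)=C(z)\neq C(y)$; (ii) no vertex lies in $\mathrm{carrier}(d_1,C)\cap\mathrm{carrier}(d_2,C)\cap\mathrm{carrier}(d_3,C)$ for three distinct colors. For each color $d$ let $r_d$ be the root (vertex closest to $r$) of $\mathrm{carrier}(d,C)$, and let $d_0$ be a color with $r_{d_0}$ at maximum distance from $r$; assume $r_{d_0}\neq r$ and let $s$ be the parent of $r_{d_0}$. Let $\bar T$ be the subtree of all descendants of $r_{d_0}$ (including $r_{d_0}$) and $\hat T=T\setminus\bar T$. Assume further that there is a color $d'\neq d_0$ with $C(V(\bar T))=\{d_0,d'\}$ and $r_{d_0}\in\mathrm{carrier}(d_0,C)\cap\mathrm{carrier}(d',C)$. All costs below are relative to $C|_{V(\bar T)}$ and $w|_{V(\bar T)}$. Let $C_{high}$ be the coloring of $V(\bar T)$ assigning $d_0$ to every vertex; let $C_{medium}$ be a minimum-cost convex coloring of $\bar T$ with colors in $\{d_0,d'\}$ among those that either equal $C_{high}$ or color $r_{d_0}$ by $d'$; let $C_{min}$ be a minimum-cost convex coloring of $\bar T$ with colors in $\{d_0,d'\}$. Define $(T',C',w_1)$: $T'$ is obtained from $T$ by replacing $\bar T$ with a two-vertex path consisting of $r_{d_0}$ (a child of $s$) and a single child $v_0$ of $r_{d_0}$;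 $w_1(v)=w(v)$ and $C'(v)=C(v)$ for $v\in V(\hat T)$; $w_1(r_{d_0})=\mathrm{cost}(C_{medium})-\mathrm{cost}(C_{min})$ and $w_1(v_0)=\mathrm{cost}(C_{high})-\mathrm{cost}(C_{min})$; $C'(r_{d_0})=d_0$ if $w_1(r_{d_0})>0$ and $C'(v_0)=d'$ if $w_1(v_0)>0$ (otherwise they are uncolored). Then $$\mathrm{OPT}(T',C',w_1)=\mathrm{OPT}(T,C,w)-\mathrm{cost}(C_{min}).$$
   Context: For a partial coloring $C$ and color $d$, $\mathrm{carrier}(d,C)$ is the minimal connected subtree containing all vertices $v$ with $C(v)=d$. A partial coloring of a tree is convex if it can be extended to a total coloring in which every color class induces a connected subtree. For a (partial) input coloring $C$ with weights $w$ and a convex total coloring $C''$, $\mathrm{cost}(C'')=w(\{v\in\mathrm{Domain}(C): C''(v)\neq C(v)\})$, and $\mathrm{OPT}(T,C,w)$ is the minimum cost of a convex total coloring of $T$ (equivalently the minimum weight of a set $X$ such that $C$ restricted to $\mathrm{Domain}(C)\setminus X$ is convex). *)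

theory Defs
  imports Complex_Main
begin

text \<open>The (undirected) edges are the pairs
  {v, par v} for v different from the root.\<close>

record 'v rtree =
  verts :: "'v set"
  par   :: "'v \<Rightarrow> 'v"
  root  :: 'v

definition rooted_tree :: "'v rtree \<Rightarrow> bool" where
  "rooted_tree T \<longleftrightarrow> finite (verts T) \<and> root T \<in> verts T \<and> par T (root T) = root T
     \<and> (\<forall>v\<in>verts T. par T v \<in> verts T)
     \<and> (\<forall>v\<in>verts T. \<exists>k. (par T ^^ k) v = root T)"

definition adj :: "'v rtree \<Rightarrow> 'v \<Rightarrow> 'v \<Rightarrow> bool" where
  "adj T u v \<longleftrightarrow> u \<in> verts T \<and> v \<in> verts T \<and> u \<noteq> v \<and> (par T u = v \<or> par T v = u)"

text \<open>S induces a connected subgraph (the empty set counts as connected).\<close>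
definition connected_in :: "'v rtree \<Rightarrow> 'v set \<Rightarrow> bool" where
  "connected_in T S \<longleftrightarrow> S \<subseteq> verts T \<and>
     (\<forall>x\<in>S. \<forall>y\<in>S. (x, y) \<in> {(u, v). u \<in> S \<and> v \<in> S \<and> adj T u v}\<^sup>*)"

definition conn_hull :: "'v rtree \<Rightarrow> 'v set \<Rightarrow> 'v set" where
  "conn_hull T A = \<Inter> {S. connected_in T S \<and> A \<subseteq> S}"

definition tpath :: "'v rtree \<Rightarrow> 'v \<Rightarrow> 'v \<Rightarrow> 'v set" where
  "tpath T x z = conn_hull T {x, z}"

definition carrier :: "'v rtree \<Rightarrow> ('v \<rightharpoonup> 'c) \<Rightarrow> 'c \<Rightarrow> 'v set" where
  "carrier T C d = conn_hull T {v \<in> verts T. C v = Some d}"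

definition depth :: "'v rtree \<Rightarrow> 'v \<Rightarrow> nat" where
  "depth T v = (LEAST k. (par T ^^ k) v = root T)"

definition carrier_root :: "'v rtree \<Rightarrow> ('v \<rightharpoonup> 'c) \<Rightarrow> 'c \<Rightarrow> 'v" where
  "carrier_root T C d = (THE u. u \<in> carrier T C d \<and> (\<forall>x\<in>carrier T C d. depth T u \<le> depth T x))"

definition descendants :: "'v rtree \<Rightarrow> 'v \<Rightarrow> 'v set" where
  "descendants T v = {u \<in> verts T. \<exists>k. (par T ^^ k) u = v}"

text \<open>Total coloring (only its values on verts T matter) whose colour classes are connected.\<close>
definition convex_total :: "'v rtree \<Rightarrow> ('v \<Rightarrow> 'c) \<Rightarrow> bool" where
  "convex_total T C2 \<longleftrightarrow> (\<forall>c. connected_in T {v \<in> verts T. C2 v = c})"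

definition cost :: "'v rtree \<Rightarrow> ('v \<rightharpoonup> 'c) \<Rightarrow> ('v \<Rightarrow> real) \<Rightarrow> ('v \<Rightarrow> 'c) \<Rightarrow> real" where
  "cost T C w C2 = (\<Sum>v \<in> {v \<in> verts T. C v \<noteq> None \<and> C v \<noteq> Some (C2 v)}. w v)"

definition OPT :: "'v rtree \<Rightarrow> ('v \<rightharpoonup> 'c) \<Rightarrow> ('v \<Rightarrow> real) \<Rightarrow> real" where
  "OPT T C w = Min {cost T C w C2 | C2. convex_total T C2}"

end

theory Submission
  imports Defs
begin

text \<open>
  A convex colouring of T is the same as convex colourings of the upper part \<open>Vhat\<close> and of the
  subtree \<open>Vbar\<close> below \<open>rd0\<close> that share a colour only if it is the colour of both ends of the
  edge from \<open>rd0\<close> to its parent s; likewise for T', with the path \<open>rd0\<close>--\<open>v0\<close> in place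
  of \<open>Vbar\<close>. Inside \<open>Vbar\<close> only d0 and d' occur, and d0 occurs nowhere else, so a colouring
  of \<open>Vbar\<close> can always be improved to one using only d0 and d' (colour the subtree of the top
  of one colour class by that colour and the rest by the other). Hence, according to which of d0
  and d' are also used above \<open>Vbar\<close>, the cheapest completion inside \<open>Vbar\<close> costs at least
  cost(C_min), cost(C_medium) or cost(C_high), and these bounds are attained. The weights of
  \<open>rd0\<close> and \<open>v0\<close> in the reduced instance charge exactly the surcharges over cost(C_min), so
  colourings can be translated in both directions with costs differing by cost(C_min).
\<close>

section \<open>Connectivity with respect to a parent function\<close>

text \<open>Adjacency and connectivity depend on the parent function only, so that they apply verbatim
  to the modified parent function of the reduced tree.\<close>

definition link :: "('v \<Rightarrow> 'v) \<Rightarrow> 'v \<Rightarrow> 'v \<Rightarrow> bool" where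
  "link p u v \<longleftrightarrow> u \<noteq> v \<and> (p u = v \<or> p v = u)"

definition link_rel :: "('v \<Rightarrow> 'v) \<Rightarrow> 'v set \<Rightarrow> ('v \<times> 'v) set" where
  "link_rel p S = {(u, v). u \<in> S \<and> v \<in> S \<and> link p u v}"

definition linked :: "('v \<Rightarrow> 'v) \<Rightarrow> 'v set \<Rightarrow> bool" where
  "linked p S \<longleftrightarrow> (\<forall>x\<in>S. \<forall>y\<in>S. (x, y) \<in> (link_rel p S)\<^sup>*)"

lemma link_sym: "link p u v \<longleftrightarrow> link p v u"
  unfolding link_def by auto

lemma link_rel_rtrancl_sym: "(x, y) \<in> (link_rel p S)\<^sup>* \<Longrightarrow> (y, x) \<in> (link_rel p S)\<^sup>*"
  by (rule symD[OF sym_rtrancl]) (auto simp: sym_def link_rel_def link_sym)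

lemma link_rel_rtrancl_mono:
  "S \<subseteq> S' \<Longrightarrow> (x, y) \<in> (link_rel p S)\<^sup>* \<Longrightarrow> (x, y) \<in> (link_rel p S')\<^sup>*"
  by (erule rtrancl_mono[THEN subsetD, rotated]) (auto simp: link_rel_def)

lemma linked_cong: "(\<And>x. x \<in> S \<Longrightarrow> p x = q x) \<Longrightarrow> linked p S \<longleftrightarrow> linked q S"
proof -
  assume "\<And>x. x \<in> S \<Longrightarrow> p x = q x"
  then have "link_rel p S = link_rel q S" unfolding link_rel_def link_def by auto
  then show ?thesis unfolding linked_def by simp
qed

lemma linked_subsingleton [simp]: "linked p {}" "linked p {x}"
  unfolding linked_def by simp_all

lemma linkedD: "linked p S \<Longrightarrow> x \<in> S \<Longrightarrow> y \<in> S \<Longrightarrow> (x, y) \<in> (link_rel p S)\<^sup>*"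
  unfolding linked_def by simp

lemma linkedI_hub:
  assumes "\<And>x. x \<in> S \<Longrightarrow> (x, h) \<in> (link_rel p S)\<^sup>*"
  shows "linked p S"
  unfolding linked_def
proof (intro ballI)
  fix x y assume "x \<in> S" "y \<in> S"
  show "(x, y) \<in> (link_rel p S)\<^sup>*"
    by (rule rtrancl_trans[OF assms[OF \<open>x \<in> S\<close>] link_rel_rtrancl_sym[OF assms[OF \<open>y \<in> S\<close>]]])
qed

lemma linked_Un_link:
  assumes A: "linked p A" and B: "linked p B" and "x \<in> A" "y \<in> B" "link p x y"
  shows "linked p (A \<union> B)"
proof (rule linkedI_hub)
  fix z assume z: "z \<in> A \<union> B"
  have yx: "(y, x) \<in> (link_rel p (A \<union> B))\<^sup>*"
    using assms(3-5) link_sym[of p x y] by (intro r_into_rtrancl) (simp add: link_rel_def)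
  show "(z, x) \<in> (link_rel p (A \<union> B))\<^sup>*"
  proof (cases "z \<in> A")
    case True
    show ?thesis by (rule link_rel_rtrancl_mono[OF Un_upper1 linkedD[OF A True \<open>x \<in> A\<close>]])
  next
    case False
    then have "z \<in> B" using z by simp
    then have "(z, y) \<in> (link_rel p (A \<union> B))\<^sup>*"
      by (rule link_rel_rtrancl_mono[OF Un_upper2 linkedD[OF B _ \<open>y \<in> B\<close>]])
    then show ?thesis using yx by (rule rtrancl_trans)
  qed
qed

lemma linked_subset_link:
  assumes "link p a b" "S \<subseteq> {a, b}"
  shows "linked p S"
proof -
  have "linked p ({a} \<union> {b})" using assms(1) by (intro linked_Un_link) auto
  then have ab: "linked p {a, b}" by (simp only: Un_insert_left Un_empty_left)
  have "S = {} \<or> S = {a} \<or> S = {b} \<or> S = {a, b}" using assms(2) by blast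
  then show ?thesis using ab by (elim disjE) simp_all
qed

definition sole_exit :: "('v \<Rightarrow> 'v) \<Rightarrow> 'v set \<Rightarrow> 'v set \<Rightarrow> 'v \<Rightarrow> 'v \<Rightarrow> bool" where
  "sole_exit p S P a b \<longleftrightarrow> (\<forall>u\<in>S. \<forall>v\<in>S. link p u v \<longrightarrow> u \<in> P \<longrightarrow> v \<notin> P \<longrightarrow> u = a \<and> v = b)"

lemma sole_exit_subset: "sole_exit p W P a b \<Longrightarrow> S \<subseteq> W \<Longrightarrow> sole_exit p S P a b"
  unfolding sole_exit_def by blast

lemma sole_exit_Compl: "sole_exit p S P a b \<Longrightarrow> sole_exit p S (- P) b a"
  unfolding sole_exit_def by (metis ComplD ComplI link_sym)

lemma walk_sole_exit:
  assumes walk: "(x, y) \<in> (link_rel p S)\<^sup>*" and x: "x \<in> S \<inter> P" and exit: "sole_exit p S P a b"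
  shows "(y \<in> P \<longrightarrow> (x, y) \<in> (link_rel p (S \<inter> P))\<^sup>*) \<and>
         (y \<notin> P \<longrightarrow> (x, a) \<in> (link_rel p (S \<inter> P))\<^sup>* \<and> a \<in> S \<and> b \<in> S)"
  using walk
proof (induction rule: rtrancl_induct)
  case base
  then show ?case using x by blast
next
  case (step y z)
  then have yz: "y \<in> S" "z \<in> S" "link p y z" by (auto simp: link_rel_def)
  show ?case
  proof (cases "y \<in> P"; cases "z \<in> P")
    assume "y \<in> P" "z \<in> P"
    then have "(y, z) \<in> link_rel p (S \<inter> P)" using yz by (auto simp: link_rel_def)
    with step.IH \<open>y \<in> P\<close> \<open>z \<in> P\<close> show ?thesis by (simp add: rtrancl_into_rtrancl)
  next
    assume "y \<in> P" "z \<notin> P"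
    then have "y = a \<and> z = b" using yz exit unfolding sole_exit_def by blast
    then show ?thesis using step.IH yz \<open>y \<in> P\<close> \<open>z \<notin> P\<close> by simp
  next
    assume "y \<notin> P" "z \<in> P"
    then have "z = a" using yz exit link_sym unfolding sole_exit_def by metis
    then show ?thesis using step.IH \<open>y \<notin> P\<close> \<open>z \<in> P\<close> by simp
  next
    assume "y \<notin> P" "z \<notin> P"
    then show ?thesis using step.IH by simp
  qed
qed

lemma linked_Int_sole_exit:
  assumes "linked p S" "sole_exit p S P a b"
  shows "linked p (S \<inter> P)"
  unfolding linked_def
proof (intro ballI)
  fix x y assume x: "x \<in> S \<inter> P" and y: "y \<in> S \<inter> P"
  have "(x, y) \<in> (link_rel p S)\<^sup>*" using assms(1) x y by (simp add: linkedD)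
  from walk_sole_exit[OF this x assms(2)] y show "(x, y) \<in> (link_rel p (S \<inter> P))\<^sup>*" by simp
qed

lemma linked_Diff_sole_exit: "linked p S \<Longrightarrow> sole_exit p S P a b \<Longrightarrow> linked p (S - P)"
  using linked_Int_sole_exit[OF _ sole_exit_Compl] by (simp add: Diff_eq)

lemma sole_exit_crossed:
  assumes "linked p S" "sole_exit p S P a b" and x: "x \<in> S \<inter> P" and y: "y \<in> S - P"
  shows "a \<in> S \<and> b \<in> S"
proof -
  have "(x, y) \<in> (link_rel p S)\<^sup>*" using assms(1) x y by (simp add: linkedD)
  from walk_sole_exit[OF this x assms(2)] y show ?thesis by simp
qed

lemma exit_link:
  assumes "linked p W" "K \<subseteq> W" "x \<in> K" "y \<in> W - K"
  shows "\<exists>u\<in>K. \<exists>v\<in>W - K. link p u v"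
proof -
  have "(x, y) \<in> (link_rel p W)\<^sup>*" using assms by (simp add: linkedD subsetD)
  then have "y \<in> K \<or> (\<exists>u\<in>K. \<exists>v\<in>W - K. link p u v)"
  proof (induction rule: rtrancl_induct)
    case (step y z)
    then show ?case unfolding link_rel_def by blast
  qed (use assms in simp)
  then show ?thesis using assms by auto
qed

lemma funpow_walk:
  "(\<forall>i\<le>k. (p ^^ i) x \<in> W) \<Longrightarrow> (x, (p ^^ k) x) \<in> (link_rel p W)\<^sup>*"
proof (induction k)
  case (Suc k)
  then have IH: "(x, (p ^^ k) x) \<in> (link_rel p W)\<^sup>*" by simp
  show ?case
  proof (cases "p ((p ^^ k) x) = (p ^^ k) x")
    case False
    then have "((p ^^ k) x, (p ^^ Suc k) x) \<in> link_rel p W"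
      using Suc.prems by (auto simp: link_rel_def link_def)
    with IH show ?thesis by (rule rtrancl_into_rtrancl)
  qed (use IH in simp)
qed simp

section \<open>Convex colourings\<close>

lemma connected_in_iff_linked: "connected_in T S \<longleftrightarrow> S \<subseteq> verts T \<and> linked (par T) S"
proof -
  have "S \<subseteq> verts T \<Longrightarrow> {(u, v). u \<in> S \<and> v \<in> S \<and> adj T u v} = link_rel (par T) S"
    unfolding link_rel_def adj_def link_def by auto
  then show ?thesis unfolding connected_in_def linked_def by auto
qed

definition colour_class :: "'v set \<Rightarrow> ('v \<Rightarrow> 'c) \<Rightarrow> 'c \<Rightarrow> 'v set" where
  "colour_class W X c = {v \<in> W. X v = c}"

definition convex_colouring :: "('v \<Rightarrow> 'v) \<Rightarrow> 'v set \<Rightarrow> ('v \<Rightarrow> 'c) \<Rightarrow> bool" where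
  "convex_colouring p W X \<longleftrightarrow> (\<forall>c. linked p (colour_class W X c))"

lemma convex_total_iff: "convex_total T X \<longleftrightarrow> convex_colouring (par T) (verts T) X"
  unfolding convex_total_def convex_colouring_def colour_class_def connected_in_iff_linked by auto

lemma colour_class_subset: "colour_class W X c \<subseteq> W"
  unfolding colour_class_def by auto

lemma convex_colouring_const:
  assumes "linked p W"
  shows "convex_colouring p W (\<lambda>_. c)"
  unfolding convex_colouring_def
proof
  fix e
  have "colour_class W (\<lambda>_. c) e = (if c = e then W else {})" unfolding colour_class_def by auto
  then show "linked p (colour_class W (\<lambda>_. c) e)" using assms by simp
qed

lemma convex_colouring_cong:
  "(\<And>v. v \<in> W \<Longrightarrow> X v = Y v) \<Longrightarrow> convex_colouring p W X \<longleftrightarrow> convex_colouring p W Y"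
proof -
  assume "\<And>v. v \<in> W \<Longrightarrow> X v = Y v"
  then have "colour_class W X c = colour_class W Y c" for c unfolding colour_class_def by auto
  then show ?thesis unfolding convex_colouring_def by simp
qed

lemma convex_colouring_split:
  assumes W: "W = H \<union> Q" "H \<inter> Q = {}" and s: "s \<in> H" and r: "r \<in> Q" and sr: "link p s r"
    and exit: "sole_exit p W Q r s"
  shows "convex_colouring p W X \<longleftrightarrow> convex_colouring p H X \<and> convex_colouring p Q X \<and>
           (\<forall>c \<in> X ` H \<inter> X ` Q. X s = c \<and> X r = c)"
proof -
  have class_exit: "sole_exit p (colour_class W X c) Q r s" for c
    using exit colour_class_subset by (rule sole_exit_subset)
  have class_Q: "colour_class Q X c = colour_class W X c \<inter> Q"
    and class_H: "colour_class H X c = colour_class W X c - Q"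
    and class_W: "colour_class W X c = colour_class H X c \<union> colour_class Q X c" for c
    using W unfolding colour_class_def by auto
  show ?thesis
  proof (intro iffI conjI ballI)
    assume X: "convex_colouring p W X"
    then have lW: "linked p (colour_class W X c)" for c unfolding convex_colouring_def by simp
    show "convex_colouring p H X" "convex_colouring p Q X"
      unfolding convex_colouring_def class_H class_Q
      using linked_Diff_sole_exit[OF lW class_exit] linked_Int_sole_exit[OF lW class_exit] by simp_all
    fix c assume "c \<in> X ` H \<inter> X ` Q"
    then obtain x y where "x \<in> H" "y \<in> Q" "X x = c" "X y = c" by auto
    then have "y \<in> colour_class W X c \<inter> Q" "x \<in> colour_class W X c - Q"
      using W unfolding colour_class_def by auto
    from sole_exit_crossed[OF lW class_exit this] show "X s = c" "X r = c"
      unfolding colour_class_def by simp_all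
  next
    assume split: "convex_colouring p H X \<and> convex_colouring p Q X \<and>
      (\<forall>c \<in> X ` H \<inter> X ` Q. X s = c \<and> X r = c)"
    show "convex_colouring p W X" unfolding convex_colouring_def
    proof
      fix c
      have lH: "linked p (colour_class H X c)" and lQ: "linked p (colour_class Q X c)"
        using split unfolding convex_colouring_def by simp_all
      show "linked p (colour_class W X c)"
      proof (cases "colour_class H X c = {} \<or> colour_class Q X c = {}")
        case True
        then show ?thesis using lH lQ class_W by auto
      next
        case False
        then obtain x y where "x \<in> H" "X x = c" "y \<in> Q" "X y = c" unfolding colour_class_def by blast
        then have "c \<in> X ` H \<inter> X ` Q" using rev_image_eqI[of x H c X] rev_image_eqI[of y Q c X] by simp
        then have "s \<in> colour_class H X c" "r \<in> colour_class Q X c"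
          using split s r unfolding colour_class_def by auto
        from linked_Un_link[OF lH lQ this sr] show ?thesis using class_W by simp
      qed
    qed
  qed
qed

lemma convex_colouring_recolour:
  assumes X: "convex_colouring p W X"
    and K: "K \<subseteq> colour_class W X c" "linked p K" "linked p (colour_class W X c - K)"
    and uv: "u \<in> K" "v \<in> W" "link p u v" "X v \<noteq> c"
  shows "convex_colouring p W (\<lambda>z. if z \<in> K then X v else X z)"
  unfolding convex_colouring_def
proof
  fix e
  let ?Y = "\<lambda>z. if z \<in> K then X v else X z"
  have lX: "linked p (colour_class W X e)" using X unfolding convex_colouring_def by simp
  consider "e = X v" | "e = c" | "e \<noteq> X v" "e \<noteq> c" by blast
  then show "linked p (colour_class W ?Y e)"
  proof cases
    case 1
    have "v \<in> colour_class W X e" using uv(2) 1 unfolding colour_class_def by simp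
    from linked_Un_link[OF lX K(2) this uv(1)] uv(3) link_sym
    have "linked p (colour_class W X e \<union> K)" by metis
    moreover have "colour_class W ?Y e = colour_class W X e \<union> K"
      using K(1) 1 unfolding colour_class_def by auto
    ultimately show ?thesis by simp
  next
    case 2
    then have "colour_class W ?Y e = colour_class W X c - K"
      using uv(4) unfolding colour_class_def by auto
    then show ?thesis using K(3) by simp
  next
    case 3
    then have "colour_class W ?Y e = colour_class W X e"
      using K(1) unfolding colour_class_def by auto
    then show ?thesis using lX by simp
  qed
qed

lemma convex_colouring_rename:
  assumes "convex_colouring p W X" "b \<notin> X ` W"
  shows "convex_colouring p W (\<lambda>z. if X z = a then b else X z)"
  unfolding convex_colouring_def
proof
  fix c
  let ?Y = "\<lambda>z. if X z = a then b else X z"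
  have "colour_class W ?Y c = (if c = b then colour_class W X a else if c = a then {} else colour_class W X c)"
    using assms(2) unfolding colour_class_def by (auto simp: image_iff)
  then show "linked p (colour_class W ?Y c)" using assms(1) unfolding convex_colouring_def by simp
qed

section \<open>Rooted trees\<close>

locale rooted =
  fixes T :: "'v rtree"
  assumes rooted_tree: "rooted_tree T"
begin

lemma finite_verts: "finite (verts T)"
  and root_in_verts: "root T \<in> verts T"
  and par_root: "par T (root T) = root T"
  and par_in_verts: "x \<in> verts T \<Longrightarrow> par T x \<in> verts T"
  using rooted_tree unfolding rooted_tree_def by simp_all

lemma funpow_par_in_verts: "x \<in> verts T \<Longrightarrow> (par T ^^ k) x \<in> verts T"
  by (induction k) (auto simp: par_in_verts)

lemma funpow_par_root: "(par T ^^ k) (root T) = root T"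
  by (induction k) (auto simp: par_root)

lemma funpow_depth_eq_root: "x \<in> verts T \<Longrightarrow> (par T ^^ depth T x) x = root T"
  unfolding depth_def by (rule LeastI_ex) (use rooted_tree in \<open>auto simp: rooted_tree_def\<close>)

lemma depth_le: "(par T ^^ k) x = root T \<Longrightarrow> depth T x \<le> k"
  unfolding depth_def by (rule Least_le)

lemma depth_root: "depth T (root T) = 0"
  using depth_le[of 0 "root T"] by simp

lemma depth_funpow_par:
  assumes x: "x \<in> verts T" and z: "(par T ^^ k) x = z"
  shows "depth T z \<le> depth T x \<and> (x \<noteq> z \<longrightarrow> depth T z < depth T x)"
proof (cases "k \<le> depth T x")
  case True
  have "(par T ^^ (depth T x - k)) z = (par T ^^ (depth T x - k + k)) x"
    using z by (simp add: funpow_add)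
  also have "\<dots> = root T" using True funpow_depth_eq_root[OF x] by simp
  finally have "depth T z \<le> depth T x - k" by (rule depth_le)
  moreover have "x \<noteq> z \<Longrightarrow> k \<noteq> 0" using z by (cases k) auto
  ultimately show ?thesis using True by auto
next
  case False
  have "z = (par T ^^ (k - depth T x + depth T x)) x" using False z by simp
  also have "\<dots> = root T" by (simp add: funpow_add funpow_depth_eq_root[OF x] funpow_par_root)
  finally have "z = root T" .
  moreover have "depth T x \<noteq> 0" if "x \<noteq> root T"
  proof
    assume "depth T x = 0"
    then have "(par T ^^ 0) x = root T" using funpow_depth_eq_root[OF x] by metis
    with that show False by simp
  qed
  ultimately show ?thesis using depth_root by auto
qed

lemma depth_par_less:
  assumes c: "c \<in> verts T" "c \<noteq> root T"
  shows "depth T (par T c) < depth T c"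
proof -
  have "par T c \<noteq> c"
  proof
    assume "par T c = c"
    then have "(par T ^^ n) c = c" for n by (induction n) auto
    with funpow_depth_eq_root[OF c(1)] c(2) show False by simp
  qed
  then show ?thesis using depth_funpow_par[OF c(1), of 1] by simp
qed

lemma descendants_subset: "descendants T c \<subseteq> verts T"
  unfolding descendants_def by auto

lemma self_in_descendants: "c \<in> verts T \<Longrightarrow> c \<in> descendants T c"
  unfolding descendants_def by (auto intro: exI[of _ 0])

lemma descendants_root: "descendants T (root T) = verts T"
  unfolding descendants_def using funpow_depth_eq_root by blast

lemma depth_descendant:
  "x \<in> descendants T z \<Longrightarrow> depth T z \<le> depth T x \<and> (x \<noteq> z \<longrightarrow> depth T z < depth T x)"
  unfolding descendants_def using depth_funpow_par by blast

lemma descendants_antisym: "x \<in> descendants T y \<Longrightarrow> y \<in> descendants T x \<Longrightarrow> x = y"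
  using depth_descendant[of x y] depth_descendant[of y x] by auto

lemma descendants_trans:
  assumes "x \<in> descendants T y" "y \<in> descendants T z"
  shows "x \<in> descendants T z"
proof -
  obtain i j where "x \<in> verts T" "(par T ^^ i) x = y" "(par T ^^ j) y = z"
    using assms unfolding descendants_def by auto
  then have "x \<in> verts T" "(par T ^^ (j + i)) x = z" by (simp_all add: funpow_add)
  then show ?thesis unfolding descendants_def by blast
qed

lemma ancestor_in_verts: "x \<in> descendants T c \<Longrightarrow> c \<in> verts T"
  unfolding descendants_def using funpow_par_in_verts by blast

lemma par_in_descendants:
  assumes "u \<in> descendants T c" "u \<noteq> c"
  shows "par T u \<in> descendants T c"
proof -
  obtain k where k: "u \<in> verts T" "(par T ^^ k) u = c" using assms(1) unfolding descendants_def by auto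
  with assms(2) obtain j where "k = Suc j" by (cases k) auto
  with k have "(par T ^^ j) (par T u) = c" by (simp add: funpow_Suc_right del: funpow.simps)
  with par_in_verts[OF k(1)] show ?thesis unfolding descendants_def by auto
qed

lemma in_descendants_if_par:
  assumes "v \<in> verts T" "par T v \<in> descendants T c"
  shows "v \<in> descendants T c"
proof -
  obtain k where "(par T ^^ k) (par T v) = c" using assms(2) unfolding descendants_def by auto
  then have "(par T ^^ Suc k) v = c" by (simp add: funpow_Suc_right del: funpow.simps)
  with assms(1) show ?thesis unfolding descendants_def by blast
qed

lemma par_notin_descendants: "c \<in> verts T \<Longrightarrow> c \<noteq> root T \<Longrightarrow> par T c \<notin> descendants T c"
  using depth_descendant[of "par T c" c] depth_par_less[of c] by linarith

lemma child_towards: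
  assumes "x \<in> verts T" "(par T ^^ k) x = z" "x \<noteq> z"
  shows "\<exists>c. par T c = z \<and> c \<noteq> z \<and> x \<in> descendants T c"
  using assms
proof (induction k arbitrary: x)
  case (Suc k)
  show ?case
  proof (cases "par T x = z")
    case True
    then show ?thesis using Suc.prems self_in_descendants by blast
  next
    case False
    have "(par T ^^ k) (par T x) = z" using Suc.prems(2) by (simp add: funpow_Suc_right del: funpow.simps)
    with Suc.IH[OF par_in_verts[OF Suc.prems(1)] _ False] Suc.prems(1) in_descendants_if_par
    show ?thesis by blast
  qed
qed simp

lemma sole_exit_descendants:
  assumes "S \<subseteq> verts T"
  shows "sole_exit (par T) S (descendants T c) c (par T c)"
  unfolding sole_exit_def
proof (intro ballI impI)
  fix u v assume uv: "u \<in> S" "v \<in> S" "link (par T) u v" "u \<in> descendants T c" "v \<notin> descendants T c"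
  have "par T v \<noteq> u" using in_descendants_if_par[of v c] uv assms by auto
  with uv(3) have "par T u = v" unfolding link_def by auto
  with par_in_descendants[OF uv(4)] uv(5) show "u = c \<and> v = par T c" by auto
qed

lemma linked_verts: "linked (par T) (verts T)"
proof (rule linkedI_hub)
  fix x assume x: "x \<in> verts T"
  have "(x, (par T ^^ depth T x) x) \<in> (link_rel (par T) (verts T))\<^sup>*"
    using funpow_par_in_verts[OF x] by (intro funpow_walk) blast
  then show "(x, root T) \<in> (link_rel (par T) (verts T))\<^sup>*" using funpow_depth_eq_root[OF x] by simp
qed

lemma linked_descendants: "linked (par T) (descendants T c)"
proof -
  have "linked (par T) (verts T \<inter> descendants T c)"
    by (rule linked_Int_sole_exit[OF linked_verts sole_exit_descendants]) simp
  moreover have "verts T \<inter> descendants T c = descendants T c" using descendants_subset by blast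
  ultimately show ?thesis by simp
qed

lemma linked_verts_Diff_descendants: "linked (par T) (verts T - descendants T c)"
  by (rule linked_Diff_sole_exit[OF linked_verts sole_exit_descendants]) simp

lemma linked_subset_top:
  assumes S: "S \<subseteq> verts T" "linked (par T) S" "S \<noteq> {}"
  obtains u where "u \<in> S" "S \<subseteq> descendants T u"
proof -
  have "finite S" using S(1) finite_verts by (rule finite_subset)
  then obtain u where u: "u \<in> S" "\<And>x. x \<in> S \<Longrightarrow> depth T u \<le> depth T x"
    using ex_is_arg_min_if_finite[OF _ S(3), of "depth T"] by (auto simp: is_arg_min_linorder)
  have "y \<in> descendants T u" if y: "y \<in> S" for y
  proof (rule ccontr)
    assume "y \<notin> descendants T u"
    have uV: "u \<in> verts T" using S(1) u(1) by blast
    then have "par T u \<in> S"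
      using sole_exit_crossed[OF S(2) sole_exit_descendants[OF S(1)]] u(1) y \<open>y \<notin> _\<close>
        self_in_descendants by blast
    then have "u = root T" using u(2) depth_par_less[OF uV] leD by blast
    with \<open>y \<notin> _\<close> y S(1) show False by (simp add: descendants_root subsetD)
  qed
  then show thesis using that u(1) by blast
qed

lemma deepest_common_ancestor_in_connected:
  assumes A: "A \<subseteq> verts T" "A \<subseteq> descendants T z"
    and deepest: "\<And>c. c \<in> verts T \<Longrightarrow> A \<subseteq> descendants T c \<Longrightarrow> depth T c \<le> depth T z"
    and S: "connected_in T S" "A \<subseteq> S"
  shows "A = {} \<or> z \<in> S"
proof (cases "A \<subseteq> {z}")
  case True
  then show ?thesis using S(2) by blast
next
  case False
  then obtain x where x: "x \<in> A" "x \<noteq> z" by blast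
  then obtain k where "(par T ^^ k) x = z" using A(2) unfolding descendants_def by blast
  with child_towards[OF _ this x(2)] A(1) x(1)
  obtain c where c: "par T c = z" "c \<noteq> z" "x \<in> descendants T c" by blast
  have "c \<in> verts T" using c(3) by (rule ancestor_in_verts)
  moreover have "c \<noteq> root T" using c(1,2) par_root by auto
  ultimately have "depth T z < depth T c" using depth_par_less c(1) by blast
  with \<open>c \<in> verts T\<close> deepest obtain y where y: "y \<in> A" "y \<notin> descendants T c" by fastforce
  have SV: "S \<subseteq> verts T" and "linked (par T) S" using S(1) by (simp_all add: connected_in_iff_linked)
  from sole_exit_crossed[OF this(2) sole_exit_descendants[OF SV]] x(1) y c(3) S(2)
  show ?thesis using c(1) by blast
qed

lemma subset_descendants_conn_hull_root:
  assumes A: "A \<subseteq> verts T" "A \<noteq> {}"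
  shows "A \<subseteq> descendants T (THE u. u \<in> conn_hull T A \<and> (\<forall>x\<in>conn_hull T A. depth T u \<le> depth T x))"
proof -
  define Z where "Z = {z \<in> verts T. A \<subseteq> descendants T z}"
  have "root T \<in> Z" using A(1) root_in_verts descendants_root unfolding Z_def by simp
  moreover have "finite Z" using finite_verts unfolding Z_def by simp
  ultimately have "Max (depth T ` Z) \<in> depth T ` Z" by (intro Max_in) auto
  then obtain z where z: "z \<in> Z" "depth T z = Max (depth T ` Z)" by auto
  have zA: "A \<subseteq> descendants T z" using z(1) unfolding Z_def by simp
  have "z \<in> S" if "connected_in T S" "A \<subseteq> S" for S
    using deepest_common_ancestor_in_connected[OF A(1) zA _ that] A(2) \<open>finite Z\<close> z(2)
    unfolding Z_def by auto
  then have z_in_hull: "z \<in> conn_hull T A" unfolding conn_hull_def by blast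
  have "connected_in T (descendants T z)"
    using descendants_subset linked_descendants by (simp add: connected_in_iff_linked)
  then have hull_below: "conn_hull T A \<subseteq> descendants T z"
    using zA unfolding conn_hull_def by blast
  have "(THE u. u \<in> conn_hull T A \<and> (\<forall>x\<in>conn_hull T A. depth T u \<le> depth T x)) = z"
  proof (rule the_equality)
    show "z \<in> conn_hull T A \<and> (\<forall>x\<in>conn_hull T A. depth T z \<le> depth T x)"
      using z_in_hull hull_below depth_descendant by blast
  next
    fix u assume "u \<in> conn_hull T A \<and> (\<forall>x\<in>conn_hull T A. depth T u \<le> depth T x)"
    then show "u = z" using z_in_hull hull_below depth_descendant by fastforce
  qed
  then show ?thesis using zA by simp
qed

lemma coloured_below_carrier_root:
  assumes "dom C \<subseteq> verts T" "C v = Some d"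
  shows "v \<in> descendants T (carrier_root T C d)"
  using subset_descendants_conn_hull_root[of "{v \<in> verts T. C v = Some d}"] assms
  unfolding carrier_root_def carrier_def by blast

end

section \<open>Costs of colourings\<close>

definition miscoloured :: "('v \<rightharpoonup> 'c) \<Rightarrow> ('v \<Rightarrow> 'c) \<Rightarrow> 'v \<Rightarrow> bool" where
  "miscoloured C X v \<longleftrightarrow> C v \<noteq> None \<and> C v \<noteq> Some (X v)"

definition cost_on :: "('v \<rightharpoonup> 'c) \<Rightarrow> ('v \<Rightarrow> real) \<Rightarrow> 'v set \<Rightarrow> ('v \<Rightarrow> 'c) \<Rightarrow> real" where
  "cost_on C w S X = (\<Sum>v\<in>S. if miscoloured C X v then w v else 0)"

lemma cost_eq_cost_on: "finite (verts T) \<Longrightarrow> cost T C w X = cost_on C w (verts T) X"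
  unfolding cost_def cost_on_def miscoloured_def by (rule sum.inter_filter)

lemma cost_on_Un:
  "finite A \<Longrightarrow> finite B \<Longrightarrow> A \<inter> B = {} \<Longrightarrow> cost_on C w (A \<union> B) X = cost_on C w A X + cost_on C w B X"
  unfolding cost_on_def by (rule sum.union_disjoint)

lemma cost_on_cong:
  "(\<And>v. v \<in> S \<Longrightarrow> miscoloured C X v \<longleftrightarrow> miscoloured C' Y v) \<Longrightarrow> (\<And>v. v \<in> S \<Longrightarrow> w v = w' v) \<Longrightarrow>
    cost_on C w S X = cost_on C' w' S Y"
  unfolding cost_on_def by (rule sum.cong) simp_all

lemma cost_on_singleton: "cost_on C w {x} X = (if miscoloured C X x then w x else 0)"
  unfolding cost_on_def by simp

lemma cost_on_nonneg: "(\<And>v. v \<in> S \<Longrightarrow> 0 \<le> w v) \<Longrightarrow> 0 \<le> cost_on C w S X"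
  unfolding cost_on_def by (rule sum_nonneg) simp

lemma cost_on_mono:
  assumes "\<And>v. v \<in> S \<Longrightarrow> 0 \<le> w v" and "\<And>v. v \<in> S \<Longrightarrow> miscoloured C X v \<Longrightarrow> miscoloured C Y v"
  shows "cost_on C w S X \<le> cost_on C w S Y"
  unfolding cost_on_def by (rule sum_mono) (use assms in auto)

lemma cost_on_const_le:
  assumes "\<And>v. v \<in> S \<Longrightarrow> 0 \<le> w v" "\<And>v. v \<in> S \<Longrightarrow> C v \<in> {None, Some e, Some f}"
    and "\<And>v. v \<in> S \<Longrightarrow> X v \<noteq> f"
  shows "cost_on C w S (\<lambda>_. e) \<le> cost_on C w S X"
  by (rule cost_on_mono) (use assms in \<open>force simp: miscoloured_def\<close>)+

lemma cost_on_const_add_le: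
  assumes "\<And>v. v \<in> S \<Longrightarrow> 0 \<le> w v" "\<And>v. v \<in> S \<Longrightarrow> C v \<in> {None, Some e, Some f}"
    and "\<And>v. v \<in> S \<Longrightarrow> X v \<noteq> e \<and> X v \<noteq> f" and "e \<noteq> f"
  shows "cost_on C w S (\<lambda>_. e) + cost_on C w S (\<lambda>_. f) \<le> cost_on C w S X"
  unfolding cost_on_def sum.distrib[symmetric]
  by (rule sum_mono) (use assms in \<open>force simp: miscoloured_def\<close>)

lemma finite_costs:
  assumes "finite (verts T)"
  shows "finite {cost T C w X | X. P X}"
proof (rule finite_subset)
  show "{cost T C w X | X. P X} \<subseteq> sum w ` Pow (verts T)" unfolding cost_def by blast
  show "finite (sum w ` Pow (verts T))" using assms by simp
qed

lemma OPT_shift: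
  fixes T :: "'v rtree" and T' :: "'u rtree" and C :: "'v \<rightharpoonup> 'c" and C' :: "'u \<rightharpoonup> 'c"
    and X0 :: "'v \<Rightarrow> 'c"
  assumes fin: "finite (verts T)" "finite (verts T')" and X0: "convex_total T X0"
    and down: "\<And>X. convex_total T X \<Longrightarrow> \<exists>Y. convex_total T' Y \<and> cost T' C' w' Y \<le> cost T C w X - m"
    and up: "\<And>Y. convex_total T' Y \<Longrightarrow> \<exists>X. convex_total T X \<and> cost T C w X \<le> cost T' C' w' Y + m"
  shows "OPT T' C' w' = OPT T C w - m"
proof -
  define S where "S = {cost T C w X | X. convex_total T X}"
  define S' where "S' = {cost T' C' w' Y | Y. convex_total T' Y}"
  have "finite S" unfolding S_def by (rule finite_costs[OF fin(1)])
  have "finite S'" unfolding S'_def by (rule finite_costs[OF fin(2)])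
  have "cost T C w X0 \<in> S" unfolding S_def using X0 by auto
  then have "Min S \<in> S" using \<open>finite S\<close> Min_in by auto
  then obtain X where X: "convex_total T X" "Min S = cost T C w X" unfolding S_def by auto
  from down[OF X(1)] obtain Y where Y: "convex_total T' Y" "cost T' C' w' Y \<le> cost T C w X - m"
    by auto
  then have Y_in: "cost T' C' w' Y \<in> S'" unfolding S'_def by auto
  then have le: "Min S' \<le> Min S - m" using Min_le[OF \<open>finite S'\<close> Y_in] Y(2) X(2) by linarith
  have "Min S' \<in> S'" using \<open>finite S'\<close> Y_in Min_in by auto
  then obtain Y' where Y': "convex_total T' Y'" "Min S' = cost T' C' w' Y'" unfolding S'_def by auto
  from up[OF Y'(1)] obtain X' where X': "convex_total T X'" "cost T C w X' \<le> cost T' C' w' Y' + m"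
    by auto
  then have X'_in: "cost T C w X' \<in> S" unfolding S_def by auto
  then have "Min S \<le> Min S' + m" using Min_le[OF \<open>finite S\<close> X'_in] X'(2) Y'(2) by linarith
  with le show ?thesis unfolding OPT_def S_def[symmetric] S'_def[symmetric] by simp
qed

section \<open>Two-colourings of a subtree\<close>

context rooted
begin

lemma convex_colouring_subtree_split:
  assumes "u \<in> descendants T r" "e \<noteq> f"
  shows "convex_colouring (par T) (descendants T r) (\<lambda>v. if v \<in> descendants T u then e else f)"
  unfolding convex_colouring_def
proof
  fix c
  let ?B = "descendants T r" and ?Z = "\<lambda>v. if v \<in> descendants T u then e else f"
  have below: "descendants T u \<subseteq> ?B" using descendants_trans[OF _ assms(1)] by blast
  have exit: "sole_exit (par T) ?B (descendants T u) u (par T u)"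
    using descendants_subset by (rule sole_exit_descendants)
  consider "c = e" | "c = f" | "c \<noteq> e" "c \<noteq> f" by blast
  then show "linked (par T) (colour_class ?B ?Z c)"
  proof cases
    case 1
    then have "colour_class ?B ?Z c = descendants T u"
      using below assms(2) unfolding colour_class_def by auto
    then show ?thesis using linked_descendants by simp
  next
    case 2
    then have "colour_class ?B ?Z c = ?B - descendants T u"
      using assms(2) unfolding colour_class_def by auto
    then show ?thesis using linked_Diff_sole_exit[OF linked_descendants exit] by simp
  next
    case 3
    then have "colour_class ?B ?Z c = {}" unfolding colour_class_def by auto
    then show ?thesis by simp
  qed
qed

lemma cost_on_subtree_split_le:
  assumes X: "convex_colouring (par T) (descendants T r) X"
    and w: "\<And>v. v \<in> descendants T r \<Longrightarrow> 0 \<le> w v"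
    and C: "\<And>v. v \<in> descendants T r \<Longrightarrow> C v \<in> {None, Some e, Some f}" and "e \<noteq> f"
    and u: "X u = e" "colour_class (descendants T r) X e \<subseteq> descendants T u"
    and g: "g \<in> descendants T r" "X g = f" "g \<notin> descendants T u"
  shows "cost_on C w (descendants T r) (\<lambda>v. if v \<in> descendants T u then e else f)
    \<le> cost_on C w (descendants T r) X"
proof (rule cost_on_mono[OF w])
  let ?B = "descendants T r" and ?Z = "\<lambda>v. if v \<in> descendants T u then e else f"
  fix v assume v: "v \<in> ?B" "miscoloured C ?Z v"
  then consider "C v = Some e" "v \<notin> descendants T u" | "C v = Some f" "v \<in> descendants T u"
    using C[OF v(1)] unfolding miscoloured_def by (cases "v \<in> descendants T u") auto
  then show "miscoloured C X v"
  proof cases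
    case 1
    then show ?thesis using u(2) v(1) unfolding miscoloured_def colour_class_def by auto
  next
    case 2
    have "X v \<noteq> f"
    proof
      \<comment> \<open>otherwise the f-class would contain v and g, hence the edge from u to its parent\<close>
      assume "X v = f"
      then have "v \<in> colour_class ?B X f \<inter> descendants T u" "g \<in> colour_class ?B X f - descendants T u"
        using v(1) 2 g unfolding colour_class_def by auto
      moreover have "sole_exit (par T) (colour_class ?B X f) (descendants T u) u (par T u)"
        using colour_class_subset descendants_subset by (intro sole_exit_descendants) (rule order_trans)
      moreover have "linked (par T) (colour_class ?B X f)" using X unfolding convex_colouring_def by simp
      ultimately have "u \<in> colour_class ?B X f" using sole_exit_crossed by metis
      then show False using u(1) \<open>e \<noteq> f\<close> unfolding colour_class_def by simp
    qed
    then show ?thesis using 2 unfolding miscoloured_def by simp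
  qed
qed

lemma subtree_split_at_root:
  assumes "r \<in> verts T" "u \<in> descendants T r" "colour_class (descendants T r) X a \<subseteq> descendants T u"
    and "g \<in> descendants T r" "g \<notin> descendants T u"
  shows "r \<notin> descendants T u" and "X r \<noteq> a"
proof -
  show "r \<notin> descendants T u"
  proof
    assume "r \<in> descendants T u"
    with assms(2) have "u = r" by (rule descendants_antisym)
    with assms(4,5) show False by simp
  qed
  moreover have "r \<in> descendants T r" using assms(1) by (rule self_in_descendants)
  ultimately show "X r \<noteq> a" using assms(3) unfolding colour_class_def by blast
qed

lemma colour_class_top:
  assumes "convex_colouring (par T) (descendants T r) X" "c \<in> X ` descendants T r"
  obtains u where "u \<in> descendants T r" "X u = c" "colour_class (descendants T r) X c \<subseteq> descendants T u"
proof -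
  have "colour_class (descendants T r) X c \<subseteq> verts T"
    using colour_class_subset descendants_subset by (rule order_trans)
  moreover have "linked (par T) (colour_class (descendants T r) X c)"
    using assms(1) unfolding convex_colouring_def by simp
  moreover have "colour_class (descendants T r) X c \<noteq> {}" using assms(2) unfolding colour_class_def by auto
  ultimately obtain u where "u \<in> colour_class (descendants T r) X c"
    "colour_class (descendants T r) X c \<subseteq> descendants T u"
    by (rule linked_subset_top)
  then show thesis using that unfolding colour_class_def by blast
qed

lemma two_colour_improvement:
  assumes r: "r \<in> verts T" and X: "convex_colouring (par T) (descendants T r) X"
    and w: "\<And>v. v \<in> descendants T r \<Longrightarrow> 0 \<le> w v"
    and C: "\<And>v. v \<in> descendants T r \<Longrightarrow> C v \<in> {None, Some e, Some f}" and "e \<noteq> f"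
  obtains Z where "convex_colouring (par T) (descendants T r) Z" "Z ` descendants T r \<subseteq> {e, f}"
    "cost_on C w (descendants T r) Z \<le> cost_on C w (descendants T r) X" "X r \<in> {e, f} \<Longrightarrow> Z r = X r"
proof -
  note improved = that
  let ?B = "descendants T r"
  have rB: "r \<in> ?B" using r by (rule self_in_descendants)
  have const: "thesis" if g: "g \<notin> X ` ?B" and gh: "{g, h} = {e, f}" for g h
  proof (rule improved)
    have Cg: "C v \<in> {None, Some h, Some g}" if "v \<in> ?B" for v
      using C[OF that] gh by (auto simp: doubleton_eq_iff)
    show "convex_colouring (par T) ?B (\<lambda>_. h)" using linked_descendants by (rule convex_colouring_const)
    show "(\<lambda>_. h) ` ?B \<subseteq> {e, f}" using gh by auto
    show "cost_on C w ?B (\<lambda>_. h) \<le> cost_on C w ?B X"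
      using w Cg by (rule cost_on_const_le) (use g in auto)
    show "X r \<in> {e, f} \<Longrightarrow> h = X r" using g gh rB by (auto simp: doubleton_eq_iff)
  qed
  consider "e \<notin> X ` ?B" | "f \<notin> X ` ?B" | "e \<in> X ` ?B" "f \<in> X ` ?B" by blast
  then show thesis
  proof cases
    case 1
    then show thesis by (rule const[of e f]) simp
  next
    case 2
    then show thesis by (rule const[of f e]) auto
  next
    case 3
    obtain ue where ue: "ue \<in> ?B" "X ue = e" "colour_class ?B X e \<subseteq> descendants T ue"
      using colour_class_top[OF X 3(1)] .
    obtain uf where uf: "uf \<in> ?B" "X uf = f" "colour_class ?B X f \<subseteq> descendants T uf"
      using colour_class_top[OF X 3(2)] .
    have split: "thesis"
      if u: "u \<in> ?B" "X u = a" "colour_class ?B X a \<subseteq> descendants T u"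
        and g: "g \<in> ?B" "X g = b" "g \<notin> descendants T u"
        and ab: "{a, b} = {e, f}" "a \<noteq> b"
      for u g a b
    proof (rule improved)
      have Cab: "C v \<in> {None, Some a, Some b}" if "v \<in> ?B" for v
        using C[OF that] ab(1) by (auto simp: doubleton_eq_iff)
      let ?Z = "\<lambda>v. if v \<in> descendants T u then a else b"
      show "convex_colouring (par T) ?B ?Z" using u(1) ab(2) by (rule convex_colouring_subtree_split)
      show "?Z ` ?B \<subseteq> {e, f}" using ab(1) by auto
      show "cost_on C w ?B ?Z \<le> cost_on C w ?B X"
        by (rule cost_on_subtree_split_le[OF X w Cab ab(2) u(2,3) g])
      show "X r \<in> {e, f} \<Longrightarrow> ?Z r = X r"
        using subtree_split_at_root[OF r u(1,3) g(1,3)] ab(1) by (auto simp: doubleton_eq_iff)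
    qed
    show thesis
    proof (cases "ue \<in> descendants T uf")
      case True
      have "uf \<notin> descendants T ue" using descendants_antisym[OF True] ue(2) uf(2) \<open>e \<noteq> f\<close> by auto
      with ue uf(1,2) show thesis using \<open>e \<noteq> f\<close> by (intro split[where u = ue and g = uf and a = e and b = f]) auto
    next
      case False
      with uf ue(1,2) show thesis using \<open>e \<noteq> f\<close> by (intro split[where u = uf and g = ue and a = f and b = e]) auto
    qed
  qed
qed

end

section \<open>Replacing a subtree by a path of two vertices\<close>

locale subtree_reduction = rooted T for T :: "'v rtree" +
  fixes C :: "'v \<rightharpoonup> 'c" and w :: "'v \<Rightarrow> real" and r v0 :: 'v and d0 d' :: 'c
    and Cmin Cmed :: "'v \<Rightarrow> 'c"
  assumes w_nonneg: "\<And>v. v \<in> verts T \<Longrightarrow> 0 \<le> w v"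
    and r_in_verts: "r \<in> verts T" and r_ne_root: "r \<noteq> root T"
    and v0_notin_verts: "v0 \<notin> verts T"
    and d'_ne_d0: "d' \<noteq> d0"
    and colours_below: "\<And>v. v \<in> descendants T r \<Longrightarrow> C v \<in> {None, Some d0, Some d'}"
    and d0_below: "\<And>v. v \<in> verts T \<Longrightarrow> C v = Some d0 \<Longrightarrow> v \<in> descendants T r"
    and Cmin: "convex_colouring (par T) (descendants T r) Cmin" "Cmin ` descendants T r \<subseteq> {d0, d'}"
    and Cmin_le: "\<And>X. convex_colouring (par T) (descendants T r) X \<Longrightarrow> X ` descendants T r \<subseteq> {d0, d'} \<Longrightarrow>
      cost_on C w (descendants T r) Cmin \<le> cost_on C w (descendants T r) X"
    and Cmed: "convex_colouring (par T) (descendants T r) Cmed" "Cmed ` descendants T r \<subseteq> {d0, d'}"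
      "(\<forall>v \<in> descendants T r. Cmed v = d0) \<or> Cmed r = d'"
    and Cmed_le: "\<And>X. convex_colouring (par T) (descendants T r) X \<Longrightarrow> X ` descendants T r \<subseteq> {d0, d'} \<Longrightarrow>
      (\<forall>v \<in> descendants T r. X v = d0) \<or> X r = d' \<Longrightarrow>
      cost_on C w (descendants T r) Cmed \<le> cost_on C w (descendants T r) X"
begin

text \<open>In the notation of the paper, r is \<open>r\<^sub>d\<^sub>0\<close>, s its parent, \<open>Vbar\<close> and \<open>Vhat\<close> the
  vertex sets of the subtree below r and of the rest, and \<open>par'\<close>, \<open>V'\<close> describe T'.\<close>

abbreviation "Vbar \<equiv> descendants T r"
abbreviation "Vhat \<equiv> verts T - Vbar"
abbreviation "s \<equiv> par T r"
abbreviation "par' \<equiv> (par T)(v0 := r)"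
abbreviation "V' \<equiv> Vhat \<union> {r, v0}"

abbreviation "cost_min \<equiv> cost_on C w Vbar Cmin"
abbreviation "cost_med \<equiv> cost_on C w Vbar Cmed"
abbreviation "cost_high \<equiv> cost_on C w Vbar (\<lambda>_. d0)"
abbreviation "cost_low \<equiv> cost_on C w Vbar (\<lambda>_. d')"

text \<open>The cost of the reduced instance at r and \<open>v0\<close> when they are coloured a and b.\<close>

definition interface_cost :: "'c \<Rightarrow> 'c \<Rightarrow> real" where
  "interface_cost a b = (if a = d0 then 0 else cost_med - cost_min) + (if b = d' then 0 else cost_high - cost_min)"

definition reduced_cost :: "('v \<Rightarrow> 'c) \<Rightarrow> real" where
  "reduced_cost Y = cost_on C w Vhat Y + interface_cost (Y r) (Y v0)"

lemma r_in_Vbar: "r \<in> Vbar"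
  using r_in_verts by (rule self_in_descendants)

lemma s_in_Vhat: "s \<in> Vhat"
  using par_in_verts[OF r_in_verts] par_notin_descendants[OF r_in_verts r_ne_root] by simp

lemma verts_eq: "verts T = Vhat \<union> Vbar" and Vhat_Vbar_disjoint: "Vhat \<inter> Vbar = {}"
  using descendants_subset by auto

lemma finite_Vbar: "finite Vbar" and finite_Vhat: "finite Vhat"
  using finite_verts descendants_subset by (auto intro: finite_subset)

lemma v0_notin_Vhat: "v0 \<notin> Vhat" and v0_ne_r: "v0 \<noteq> r"
  using v0_notin_verts r_in_verts by auto

lemma link_s_r: "link (par T) s r" and link'_s_r: "link par' s r" and link'_r_v0: "link par' r v0"
  using s_in_Vhat r_in_Vbar v0_ne_r unfolding link_def by fastforce+

lemma par'_eq_on_Vhat: "v \<in> Vhat \<Longrightarrow> par' v = par T v"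
  using v0_notin_Vhat by auto

lemma cost_on_verts: "cost_on C w (verts T) X = cost_on C w Vhat X + cost_on C w Vbar X"
  using cost_on_Un[OF finite_Vhat finite_Vbar Vhat_Vbar_disjoint] verts_eq by simp

lemma convex_colouring_verts_iff:
  "convex_colouring (par T) (verts T) X \<longleftrightarrow>
     convex_colouring (par T) Vhat X \<and> convex_colouring (par T) Vbar X \<and>
     (\<forall>c \<in> X ` Vhat \<inter> X ` Vbar. X s = c \<and> X r = c)"
  by (rule convex_colouring_split[OF verts_eq Vhat_Vbar_disjoint s_in_Vhat r_in_Vbar link_s_r
        sole_exit_descendants[OF order_refl]])

lemma sole_exit_reduced: "sole_exit par' V' {r, v0} r s"
  unfolding sole_exit_def
proof (intro ballI impI)
  fix u v assume uv: "u \<in> V'" "v \<in> V'" "link par' u v" "u \<in> {r, v0}" "v \<notin> {r, v0}"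
  then have v: "v \<in> Vhat" by simp
  have "par T v \<noteq> r" using in_descendants_if_par[of v r] v r_in_Vbar by auto
  moreover have "par T v \<noteq> v0" using par_in_verts v v0_notin_verts by auto
  ultimately have "par' v \<noteq> u" using uv(4) par'_eq_on_Vhat[OF v] by auto
  with uv(3) have par'_u: "par' u = v" unfolding link_def by auto
  have "v \<noteq> r" using v r_in_Vbar by auto
  with par'_u have "u \<noteq> v0" by auto
  with par'_u uv(4) v0_ne_r show "u = r \<and> v = s" by auto
qed

lemma link_from_Vhat:
  assumes "u \<in> Vhat" "v \<in> {r, v0}" "link par' v u"
  shows "v = r"
proof -
  have "u \<in> V'" "v \<in> V'" "u \<notin> {r, v0}" using assms(1,2) r_in_Vbar v0_notin_Vhat by auto
  from sole_exit_reduced[unfolded sole_exit_def, rule_format, OF \<open>v \<in> V'\<close> \<open>u \<in> V'\<close> assms(3) assms(2)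
      \<open>u \<notin> {r, v0}\<close>]
  show ?thesis by simp
qed

lemma linked_Vhat: "linked par' Vhat"
  using linked_verts_Diff_descendants linked_cong[of Vhat par' "par T"] par'_eq_on_Vhat by simp

lemma linked_reduced: "linked par' V'"
  using linked_Un_link[OF linked_Vhat linked_subset_link[OF link'_r_v0 order_refl] s_in_Vhat _ link'_s_r]
  by simp

lemma convex_colouring_reduced_iff:
  "convex_colouring par' V' Y \<longleftrightarrow>
     convex_colouring (par T) Vhat Y \<and> (\<forall>c \<in> Y ` Vhat \<inter> {Y r, Y v0}. Y s = c \<and> Y r = c)"
proof -
  have "convex_colouring par' V' Y \<longleftrightarrow> convex_colouring par' Vhat Y \<and> convex_colouring par' {r, v0} Y \<and>
      (\<forall>c \<in> Y ` Vhat \<inter> Y ` {r, v0}. Y s = c \<and> Y r = c)"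
    by (rule convex_colouring_split[OF refl _ s_in_Vhat _ link'_s_r sole_exit_reduced])
      (use v0_notin_Vhat r_in_Vbar in auto)
  moreover have "convex_colouring par' {r, v0} Y"
    unfolding convex_colouring_def
  proof
    fix c
    show "linked par' (colour_class {r, v0} Y c)"
      using link'_r_v0 colour_class_subset by (rule linked_subset_link)
  qed
  moreover have "linked par' (colour_class Vhat Y c) \<longleftrightarrow> linked (par T) (colour_class Vhat Y c)" for c
    by (rule linked_cong) (auto simp: colour_class_def v0_notin_verts)
  then have "convex_colouring par' Vhat Y \<longleftrightarrow> convex_colouring (par T) Vhat Y"
    unfolding convex_colouring_def by simp
  ultimately show ?thesis by simp
qed

lemma w_nonneg_Vbar: "v \<in> Vbar \<Longrightarrow> 0 \<le> w v"
  using w_nonneg descendants_subset by blast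

lemma w_nonneg_Vhat: "v \<in> Vhat \<Longrightarrow> 0 \<le> w v"
  using w_nonneg by blast

lemma two_colour_improvement_below:
  assumes "convex_colouring (par T) Vbar X"
  obtains Z where "convex_colouring (par T) Vbar Z" "Z ` Vbar \<subseteq> {d0, d'}"
    "cost_on C w Vbar Z \<le> cost_on C w Vbar X" "X r \<in> {d0, d'} \<longrightarrow> Z r = X r"
  by (rule two_colour_improvement[where w = w and C = C, OF r_in_verts assms _ _ d'_ne_d0[symmetric]])
    (assumption | rule w_nonneg_Vbar colours_below that impI)+

lemma cost_min_le:
  assumes "convex_colouring (par T) Vbar X"
  shows "cost_min \<le> cost_on C w Vbar X"
proof -
  obtain Z where "convex_colouring (par T) Vbar Z" "Z ` Vbar \<subseteq> {d0, d'}"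
    "cost_on C w Vbar Z \<le> cost_on C w Vbar X" "X r \<in> {d0, d'} \<longrightarrow> Z r = X r"
    by (rule two_colour_improvement_below[OF assms])
  with Cmin_le show ?thesis by fastforce
qed

lemma cost_med_le:
  assumes "convex_colouring (par T) Vbar X" "X r = d'"
  shows "cost_med \<le> cost_on C w Vbar X"
proof -
  obtain Z where "convex_colouring (par T) Vbar Z" "Z ` Vbar \<subseteq> {d0, d'}"
    "cost_on C w Vbar Z \<le> cost_on C w Vbar X" "X r \<in> {d0, d'} \<longrightarrow> Z r = X r"
    by (rule two_colour_improvement_below[OF assms(1)])
  moreover from this(4) assms(2) have "Z r = d'" by simp
  ultimately show ?thesis using Cmed_le[of Z] by fastforce
qed

lemma cost_high_le: "d' \<notin> X ` Vbar \<Longrightarrow> cost_high \<le> cost_on C w Vbar X"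
  using w_nonneg_Vbar colours_below by (rule cost_on_const_le) auto

lemma cost_low_le: "d0 \<notin> X ` Vbar \<Longrightarrow> cost_low \<le> cost_on C w Vbar X"
proof (rule cost_on_const_le[OF w_nonneg_Vbar])
  show "C v \<in> {None, Some d', Some d0}" if "v \<in> Vbar" for v
    using colours_below[OF that] by auto
qed auto

lemma cost_high_low_le: "d0 \<notin> X ` Vbar \<Longrightarrow> d' \<notin> X ` Vbar \<Longrightarrow> cost_high + cost_low \<le> cost_on C w Vbar X"
  using w_nonneg_Vbar colours_below by (rule cost_on_const_add_le) (use d'_ne_d0 in auto)

lemma cost_min_nonneg: "0 \<le> cost_min"
  using w_nonneg_Vbar by (rule cost_on_nonneg)

lemma cost_min_le_med: "cost_min \<le> cost_med"
  using cost_min_le Cmed(1) by blast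

lemma cost_med_le_high: "cost_med \<le> cost_high"
  using Cmed_le[OF convex_colouring_const[OF linked_descendants], of d0] by auto

lemma cost_med_le_low: "cost_med \<le> cost_low"
  using Cmed_le[OF convex_colouring_const[OF linked_descendants], of d'] r_in_Vbar by auto

lemma cost_on_reduced:
  assumes "\<And>v. v \<in> Vhat \<Longrightarrow> C' v = C v" "\<And>v. v \<in> Vhat \<Longrightarrow> w1 v = w v"
    and "w1 r = cost_med - cost_min" "w1 v0 = cost_high - cost_min"
    and "C' r = (if 0 < w1 r then Some d0 else None)" "C' v0 = (if 0 < w1 v0 then Some d' else None)"
  shows "cost_on C' w1 V' Y = reduced_cost Y"
proof -
  have "cost_on C' w1 ({r} \<union> {v0}) Y = cost_on C' w1 {r} Y + cost_on C' w1 {v0} Y"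
    by (rule cost_on_Un) (use v0_ne_r in auto)
  then have split_B': "cost_on C' w1 {r, v0} Y = cost_on C' w1 {r} Y + cost_on C' w1 {v0} Y"
    by (simp only: Un_insert_left Un_empty_left)
  have "cost_on C' w1 V' Y = cost_on C' w1 Vhat Y + cost_on C' w1 {r, v0} Y"
    by (rule cost_on_Un) (use finite_Vhat r_in_Vbar v0_notin_Vhat in auto)
  also have "\<dots> = cost_on C' w1 Vhat Y + cost_on C' w1 {r} Y + cost_on C' w1 {v0} Y"
    using split_B' by simp
  also have "cost_on C' w1 Vhat Y = cost_on C w Vhat Y"
    by (rule cost_on_cong) (simp_all add: assms(1,2) miscoloured_def)
  also have "cost_on C' w1 {r} Y = (if Y r = d0 then 0 else cost_med - cost_min)"
    using assms(3,5) cost_min_le_med unfolding cost_on_singleton miscoloured_def by auto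
  also have "cost_on C' w1 {v0} Y = (if Y v0 = d' then 0 else cost_high - cost_min)"
    using assms(4,6) cost_min_le_med cost_med_le_high unfolding cost_on_singleton miscoloured_def
    by auto
  finally show ?thesis unfolding reduced_cost_def interface_cost_def by simp
qed

lemma reduce_with_interface:
  assumes X: "convex_colouring (par T) (verts T) X"
    and legal: "\<forall>c \<in> X ` Vhat \<inter> {a, b}. X s = c \<and> a = c"
  shows "convex_colouring par' V' (X(r := a, v0 := b))"
    and "reduced_cost (X(r := a, v0 := b)) = cost_on C w Vhat X + interface_cost a b"
proof -
  let ?Y = "X(r := a, v0 := b)"
  have Y_Vhat: "?Y v = X v" if "v \<in> Vhat" for v using that r_in_Vbar v0_notin_Vhat by auto
  have Y_r: "?Y r = a" and Y_v0: "?Y v0 = b" using v0_ne_r by simp_all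
  have Y_s: "?Y s = X s" using s_in_Vhat by (rule Y_Vhat)
  have image_Vhat: "?Y ` Vhat = X ` Vhat" by (rule image_cong[OF refl Y_Vhat])
  have "convex_colouring (par T) Vhat ?Y \<longleftrightarrow> convex_colouring (par T) Vhat X"
    by (rule convex_colouring_cong) (rule Y_Vhat)
  moreover have "convex_colouring (par T) Vhat X" using X by (simp only: convex_colouring_verts_iff)
  ultimately have "convex_colouring (par T) Vhat ?Y" by (rule iffD2)
  then show "convex_colouring par' V' ?Y"
    unfolding convex_colouring_reduced_iff image_Vhat Y_s Y_r Y_v0 using legal by (rule conjI)
  have "cost_on C w Vhat ?Y = cost_on C w Vhat X"
    by (rule cost_on_cong) (simp_all only: miscoloured_def Y_Vhat)
  then show "reduced_cost ?Y = cost_on C w Vhat X + interface_cost a b"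
    unfolding reduced_cost_def Y_r Y_v0 by simp
qed

lemma shared_colour_at_interface:
  assumes "convex_colouring (par T) (verts T) X" "c \<in> X ` Vhat" "c \<in> X ` Vbar"
  shows "X s = c \<and> X r = c"
proof -
  have "\<forall>c \<in> X ` Vhat \<inter> X ` Vbar. X s = c \<and> X r = c"
    using assms(1) unfolding convex_colouring_verts_iff by (elim conjE)
  with assms(2,3) show ?thesis by blast
qed

lemma interface_if_d0_cut:
  assumes X: "convex_colouring (par T) (verts T) X" and d0: "d0 \<in> X ` Vhat" "X s \<noteq> d0"
  obtains a b where "\<forall>c \<in> X ` Vhat \<inter> {a, b}. X s = c \<and> a = c"
    "interface_cost a b \<le> cost_on C w Vbar X - cost_min"
proof -
  have "d0 \<notin> X ` Vbar" using shared_colour_at_interface[OF X d0(1)] d0(2) by blast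
  then have low: "cost_low \<le> cost_on C w Vbar X" by (rule cost_low_le)
  note bounds = cost_min_nonneg cost_min_le_med cost_med_le_high cost_med_le_low
  show thesis
  proof (cases "d' \<in> X ` Vhat \<longrightarrow> X s = d'")
    case True
    then show thesis using low bounds d'_ne_d0 by (intro that[of d' d']) (auto simp: interface_cost_def)
  next
    case False
    then have "d' \<notin> X ` Vbar" using shared_colour_at_interface[OF X, of d'] by blast
    with \<open>d0 \<notin> X ` Vbar\<close> have "cost_high + cost_low \<le> cost_on C w Vbar X" by (rule cost_high_low_le)
    then show thesis using d0(2) False bounds
      by (intro that[of "X s" "X s"]) (auto simp: interface_cost_def)
  qed
qed

lemma interface_if_d0_joins:
  assumes X: "convex_colouring (par T) (verts T) X" and d0: "d0 \<in> X ` Vhat \<longrightarrow> X s = d0"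
  obtains a b where "\<forall>c \<in> X ` Vhat \<inter> {a, b}. X s = c \<and> a = c"
    "interface_cost a b \<le> cost_on C w Vbar X - cost_min"
proof -
  have XB: "convex_colouring (par T) Vbar X" using X by (simp only: convex_colouring_verts_iff)
  note bounds = cost_min_le[OF XB] cost_min_nonneg cost_min_le_med cost_med_le_high
  show thesis
  proof (cases "d' \<in> X ` Vhat")
    case False
    then show thesis using d0 bounds by (intro that[of d0 d']) (auto simp: interface_cost_def)
  next
    case d': True
    show thesis
    proof (cases "X s = d'")
      case True
      have "cost_med \<le> cost_on C w Vbar X"
      proof (cases "X r = d'")
        case True
        with XB show ?thesis by (rule cost_med_le)
      next
        case False
        then have "d' \<notin> X ` Vbar" using shared_colour_at_interface[OF X d'] by blast
        then show ?thesis using cost_high_le cost_med_le_high by fastforce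
      qed
      then show thesis using True bounds d'_ne_d0 by (intro that[of d' d']) (auto simp: interface_cost_def)
    next
      case False
      then have "d' \<notin> X ` Vbar" using shared_colour_at_interface[OF X d'] by blast
      then have "cost_high \<le> cost_on C w Vbar X" by (rule cost_high_le)
      then show thesis using d0 bounds d'_ne_d0 by (intro that[of d0 d0]) (auto simp: interface_cost_def)
    qed
  qed
qed

lemma interface_exists:
  assumes "convex_colouring (par T) (verts T) X"
  obtains a b where "\<forall>c \<in> X ` Vhat \<inter> {a, b}. X s = c \<and> a = c"
    "interface_cost a b \<le> cost_on C w Vbar X - cost_min"
proof (cases "d0 \<in> X ` Vhat \<and> X s \<noteq> d0")
  case True
  then obtain a b where "\<forall>c \<in> X ` Vhat \<inter> {a, b}. X s = c \<and> a = c"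
    "interface_cost a b \<le> cost_on C w Vbar X - cost_min"
    using interface_if_d0_cut[OF assms] by blast
  then show thesis by (rule that)
next
  case False
  then obtain a b where "\<forall>c \<in> X ` Vhat \<inter> {a, b}. X s = c \<and> a = c"
    "interface_cost a b \<le> cost_on C w Vbar X - cost_min"
    using interface_if_d0_joins[OF assms] by blast
  then show thesis by (rule that)
qed

lemma glue_colourings:
  assumes "convex_colouring (par T) Vhat XH" "convex_colouring (par T) Vbar XB"
    and shared: "\<forall>c \<in> XH ` Vhat \<inter> XB ` Vbar. XH s = c \<and> XB r = c"
  defines "X \<equiv> \<lambda>v. if v \<in> Vbar then XB v else XH v"
  shows "convex_colouring (par T) (verts T) X"
    and "cost_on C w (verts T) X = cost_on C w Vhat XH + cost_on C w Vbar XB"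
proof -
  have X_Vhat: "X v = XH v" if "v \<in> Vhat" for v using that unfolding X_def by simp
  have X_Vbar: "X v = XB v" if "v \<in> Vbar" for v using that unfolding X_def by simp
  have "convex_colouring (par T) Vhat X" using assms(1) convex_colouring_cong[of Vhat X XH] X_Vhat by simp
  moreover have "convex_colouring (par T) Vbar X" using assms(2) convex_colouring_cong[of Vbar X XB] X_Vbar by simp
  moreover have "X ` Vhat = XH ` Vhat" by (rule image_cong[OF refl X_Vhat])
  moreover have "X ` Vbar = XB ` Vbar" by (rule image_cong[OF refl X_Vbar])
  moreover have "X s = XH s" "X r = XB r" using X_Vhat[OF s_in_Vhat] X_Vbar[OF r_in_Vbar] .
  ultimately show "convex_colouring (par T) (verts T) X"
    unfolding convex_colouring_verts_iff using shared by simp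
  have "cost_on C w Vhat X = cost_on C w Vhat XH" by (rule cost_on_cong) (simp_all only: miscoloured_def X_Vhat)
  moreover have "cost_on C w Vbar X = cost_on C w Vbar XB" by (rule cost_on_cong) (simp_all only: miscoloured_def X_Vbar)
  ultimately show "cost_on C w (verts T) X = cost_on C w Vhat XH + cost_on C w Vbar XB"
    by (simp add: cost_on_verts)
qed

lemma cost_on_Vhat_change_d0_le:
  assumes "\<And>z. z \<in> Vhat \<Longrightarrow> Y z \<noteq> d0 \<Longrightarrow> Y' z = Y z"
  shows "cost_on C w Vhat Y' \<le> cost_on C w Vhat Y"
proof (rule cost_on_mono[OF w_nonneg_Vhat])
  fix z assume z: "z \<in> Vhat" "miscoloured C Y' z"
  have "C z \<noteq> Some d0" using z(1) d0_below by blast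
  with z assms[OF z(1)] show "miscoloured C Y z" unfolding miscoloured_def by (cases "Y z = d0") auto
qed

text \<open>Since the input uses d0 only in \<open>Vbar\<close>, the class of d0 above r can be merged into a
  neighbouring class at no cost.\<close>

lemma drop_d0_above:
  assumes Y: "convex_colouring par' V' Y" and Y_r: "Y r \<noteq> d0"
  obtains Y' where "convex_colouring par' V' Y'" "Y' r = Y r" "Y' v0 = Y v0" "d0 \<notin> Y' ` Vhat"
    "cost_on C w Vhat Y' \<le> cost_on C w Vhat Y"
proof (cases "d0 \<in> Y ` Vhat")
  case False
  then show thesis by (rule that[OF Y refl refl]) simp
next
  case True
  define K where "K = colour_class Vhat Y d0"
  have K_sub: "K \<subseteq> colour_class V' Y d0" unfolding K_def colour_class_def by auto
  have "convex_colouring (par T) Vhat Y" using Y unfolding convex_colouring_reduced_iff by (rule conjunct1)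
  then have "linked (par T) K" unfolding K_def convex_colouring_def by simp
  moreover have "linked par' K \<longleftrightarrow> linked (par T) K"
    by (rule linked_cong) (auto simp: K_def colour_class_def v0_notin_verts)
  ultimately have K_linked: "linked par' K" by simp
  have "colour_class V' Y d0 - K \<subseteq> {v0}" using Y_r unfolding K_def colour_class_def by auto
  then have rest_linked: "linked par' (colour_class V' Y d0 - K)"
    by (metis linked_subsingleton subset_singletonD)
  obtain x where x: "x \<in> K" using True unfolding K_def colour_class_def by auto
  have r: "r \<in> V' - K" using r_in_Vbar unfolding K_def colour_class_def by simp
  have "K \<subseteq> V'" by (rule order_trans[OF K_sub colour_class_subset])
  from exit_link[OF linked_reduced this x r]
  obtain u v where uv: "u \<in> K" "v \<in> V' - K" "link par' u v" by blast
  have "Y v \<noteq> d0"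
  proof (cases "v \<in> Vhat")
    case True
    then show ?thesis using uv(2) unfolding K_def colour_class_def by simp
  next
    case False
    then have "v \<in> {r, v0}" using uv(2) by auto
    moreover have "u \<in> Vhat" using uv(1) unfolding K_def colour_class_def by simp
    moreover have "link par' v u" using uv(3) by (simp only: link_sym)
    ultimately have "v = r" by (intro link_from_Vhat)
    then show ?thesis using Y_r by simp
  qed
  define Y' where "Y' = (\<lambda>z. if z \<in> K then Y v else Y z)"
  show thesis
  proof (rule that)
    show "convex_colouring par' V' Y'" unfolding Y'_def
      by (rule convex_colouring_recolour[OF Y K_sub K_linked rest_linked uv(1) _ uv(3) \<open>Y v \<noteq> d0\<close>])
        (use uv(2) in blast)
    show "Y' r = Y r" "Y' v0 = Y v0" unfolding Y'_def K_def colour_class_def using v0_notin_Vhat r_in_Vbar by auto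
    show "d0 \<notin> Y' ` Vhat" using \<open>Y v \<noteq> d0\<close> unfolding Y'_def K_def colour_class_def by auto
    show "cost_on C w Vhat Y' \<le> cost_on C w Vhat Y"
      by (rule cost_on_Vhat_change_d0_le) (simp add: Y'_def K_def colour_class_def)
  qed
qed

lemma convex_colouring_const_Vbar: "convex_colouring (par T) Vbar (\<lambda>_. c)"
  using linked_descendants by (rule convex_colouring_const)

lemma expand_if_d0_d':
  assumes Y: "convex_colouring par' V' Y" and Y_r: "Y r = d0" and Y_v0: "Y v0 = d'"
  shows "\<exists>X. convex_colouring (par T) (verts T) X \<and> cost_on C w (verts T) X \<le> reduced_cost Y + cost_min"
proof -
  note Y_split = Y[unfolded convex_colouring_reduced_iff]
  have YH: "convex_colouring (par T) Vhat Y" using Y_split by (rule conjunct1)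
  have Y_shared: "\<And>c. c \<in> Y ` Vhat \<Longrightarrow> c = Y r \<or> c = Y v0 \<Longrightarrow> Y s = c \<and> Y r = c"
    using Y_split by blast
  have no_d': "d' \<notin> Y ` Vhat" using Y_shared Y_v0 Y_r d'_ne_d0 by fastforce
  define XH where "XH = (\<lambda>z. if Y z = d0 then Cmin r else Y z)"
  have "Cmin r = d0 \<or> Cmin r = d'" using Cmin(2) r_in_Vbar by blast
  then have "convex_colouring (par T) Vhat XH"
    using YH convex_colouring_rename[OF YH no_d'] unfolding XH_def by (auto simp: if_cancel)
  moreover have "\<forall>c \<in> XH ` Vhat \<inter> Cmin ` Vbar. XH s = c \<and> Cmin r = c"
  proof
    fix c assume c: "c \<in> XH ` Vhat \<inter> Cmin ` Vbar"
    then obtain x where x: "x \<in> Vhat" "XH x = c" by blast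
    have "c = d0 \<or> c = d'" using c Cmin(2) by blast
    then have "Y x = d0" using x no_d' unfolding XH_def by (auto split: if_splits)
    then have "d0 \<in> Y ` Vhat" by (intro rev_image_eqI[OF x(1)]) simp
    then have "Y s = d0" using Y_shared[of d0] Y_r by simp
    then show "XH s = c \<and> Cmin r = c" using x \<open>Y x = d0\<close> unfolding XH_def by simp
  qed
  moreover have "cost_on C w Vhat XH \<le> cost_on C w Vhat Y"
    by (rule cost_on_Vhat_change_d0_le) (simp add: XH_def)
  ultimately show ?thesis
    using glue_colourings[OF _ Cmin(1)] Y_r Y_v0
    by (intro exI[of _ "\<lambda>v. if v \<in> Vbar then Cmin v else XH v"])
      (simp add: reduced_cost_def interface_cost_def)
qed

lemma expand_if_r_d0:
  assumes Y: "convex_colouring par' V' Y" and Y_r: "Y r = d0"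
  shows "\<exists>X. convex_colouring (par T) (verts T) X \<and> cost_on C w (verts T) X \<le> reduced_cost Y + cost_min"
proof (cases "Y v0 = d'")
  case True
  with Y Y_r show ?thesis by (rule expand_if_d0_d')
next
  case False
  note Y_split = Y[unfolded convex_colouring_reduced_iff]
  have YH: "convex_colouring (par T) Vhat Y" using Y_split by (rule conjunct1)
  have "\<And>c. c \<in> Y ` Vhat \<Longrightarrow> c = Y r \<or> c = Y v0 \<Longrightarrow> Y s = c \<and> Y r = c"
    using Y_split by blast
  then have "\<forall>c \<in> Y ` Vhat \<inter> (\<lambda>_. d0) ` Vbar. Y s = c \<and> d0 = c" using Y_r by auto
  from glue_colourings[OF YH convex_colouring_const_Vbar this] show ?thesis
    using False Y_r by (intro exI[of _ "\<lambda>v. if v \<in> Vbar then d0 else Y v"])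
      (simp add: reduced_cost_def interface_cost_def)
qed

lemma expand_if_r_not_d0:
  assumes Y: "convex_colouring par' V' Y" and Y_r: "Y r \<noteq> d0"
  shows "\<exists>X. convex_colouring (par T) (verts T) X \<and> cost_on C w (verts T) X \<le> reduced_cost Y + cost_min"
proof -
  obtain Y' where Y': "convex_colouring par' V' Y'" "Y' r = Y r" "Y' v0 = Y v0" "d0 \<notin> Y' ` Vhat"
    and cost_Y': "cost_on C w Vhat Y' \<le> cost_on C w Vhat Y"
    using drop_d0_above[OF Y Y_r] by blast
  note Y'_split = Y'(1)[unfolded convex_colouring_reduced_iff]
  have YH: "convex_colouring (par T) Vhat Y'" using Y'_split by (rule conjunct1)
  have Y_shared: "\<And>c. c \<in> Y' ` Vhat \<Longrightarrow> c = Y' r \<or> c = Y' v0 \<Longrightarrow> Y' s = c \<and> Y' r = c"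
    using Y'_split by blast
  show ?thesis
  proof (cases "Y v0 = d'")
    case True
    have "\<forall>c \<in> Y' ` Vhat \<inter> Cmed ` Vbar. Y' s = c \<and> Cmed r = c"
    proof
      fix c assume c: "c \<in> Y' ` Vhat \<inter> Cmed ` Vbar"
      then have "c = d'" using Cmed(2) Y'(4) by blast
      then have "\<not> (\<forall>v \<in> Vbar. Cmed v = d0)" using c d'_ne_d0 by auto
      then have "Cmed r = d'" using Cmed(3) by blast
      moreover have "Y' s = d'" using Y_shared[of d'] c \<open>c = d'\<close> Y'(3) True by simp
      ultimately show "Y' s = c \<and> Cmed r = c" using \<open>c = d'\<close> by simp
    qed
    from glue_colourings[OF YH Cmed(1) this] show ?thesis
      using True Y_r cost_Y' by (intro exI[of _ "\<lambda>v. if v \<in> Vbar then Cmed v else Y' v"])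
        (simp add: reduced_cost_def interface_cost_def)
  next
    case False
    have "\<forall>c \<in> Y' ` Vhat \<inter> (\<lambda>_. d0) ` Vbar. Y' s = c \<and> d0 = c" using Y'(4) by auto
    from glue_colourings[OF YH convex_colouring_const_Vbar this] show ?thesis
      using False Y_r cost_Y' cost_min_le_med
      by (intro exI[of _ "\<lambda>v. if v \<in> Vbar then d0 else Y' v"])
        (simp add: reduced_cost_def interface_cost_def)
  qed
qed

lemma expand_colouring:
  "convex_colouring par' V' Y \<Longrightarrow>
    \<exists>X. convex_colouring (par T) (verts T) X \<and> cost_on C w (verts T) X \<le> reduced_cost Y + cost_min"
  using expand_if_r_d0 expand_if_r_not_d0 by blast

lemma reduce_colouring:
  assumes "convex_colouring (par T) (verts T) X"
  shows "\<exists>Y. convex_colouring par' V' Y \<and> reduced_cost Y \<le> cost_on C w (verts T) X - cost_min"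
proof -
  obtain a b where "\<forall>c \<in> X ` Vhat \<inter> {a, b}. X s = c \<and> a = c"
    "interface_cost a b \<le> cost_on C w Vbar X - cost_min"
    using interface_exists[OF assms] by blast
  from reduce_with_interface[OF assms this(1)] this(2) show ?thesis
    by (intro exI[of _ "X(r := a, v0 := b)"]) (simp add: cost_on_verts)
qed

lemma OPT_reduced:
  assumes T': "verts T' = V'" "par T' = par'"
    and "\<And>v. v \<in> Vhat \<Longrightarrow> C' v = C v" "\<And>v. v \<in> Vhat \<Longrightarrow> w1 v = w v"
    and "w1 r = cost_med - cost_min" "w1 v0 = cost_high - cost_min"
    and "C' r = (if 0 < w1 r then Some d0 else None)" "C' v0 = (if 0 < w1 v0 then Some d' else None)"
  shows "OPT T' C' w1 = OPT T C w - cost_min"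
proof (rule OPT_shift)
  have "finite V'" using finite_Vhat by simp
  then show "finite (verts T')" using T'(1) by simp
  have cost_T': "cost T' C' w1 Y = reduced_cost Y" for Y
  proof -
    have "cost T' C' w1 Y = cost_on C' w1 (verts T') Y" by (rule cost_eq_cost_on) fact
    also have "\<dots> = reduced_cost Y" unfolding T'(1) by (rule cost_on_reduced[OF assms(3-)])
    finally show ?thesis .
  qed
  have convex_T': "convex_colouring (par T') (verts T') Y \<longleftrightarrow> convex_colouring par' V' Y" for Y
    using T' by simp
  have cost_T: "cost T C w X = cost_on C w (verts T) X" for X
    using finite_verts by (rule cost_eq_cost_on)
  show "finite (verts T)" by (rule finite_verts)
  show "convex_total T (\<lambda>_. d0)"
    unfolding convex_total_iff using linked_verts by (rule convex_colouring_const)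
  show "\<exists>Y. convex_total T' Y \<and> cost T' C' w1 Y \<le> cost T C w X - cost_min" if "convex_total T X" for X
    using reduce_colouring[of X] that unfolding convex_total_iff convex_T' cost_T' cost_T by blast
  show "\<exists>X. convex_total T X \<and> cost T C w X \<le> cost T' C' w1 Y + cost_min" if "convex_total T' Y" for Y
    using expand_colouring[of Y] that unfolding convex_total_iff convex_T' cost_T' cost_T by blast
qed

end

theorem mainTheorem9:
  fixes T :: "'v rtree" and C :: "'v \<rightharpoonup> 'c" and w :: "'v \<Rightarrow> real"
    and d0 d' :: 'c and rd0 v0 :: 'v and Vbar Vhat :: "'v set" and Tbar T' :: "'v rtree"
    and Cmin Cmed :: "'v \<Rightarrow> 'c" and w1 :: "'v \<Rightarrow> real" and C' :: "'v \<rightharpoonup> 'c"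
  assumes tree: "rooted_tree T"
    and w_nonneg: "\<forall>v\<in>verts T. w v \<ge> 0"
    and dom_C: "dom C = {v \<in> verts T. w v > 0}"
    \<comment> \<open>(i)\<close>
    and no_xyz: "\<not> (\<exists>x\<in>dom C. \<exists>y\<in>dom C. \<exists>z\<in>dom C. y \<in> tpath T x z \<and> C x = C z \<and> C x \<noteq> C y)"
    \<comment> \<open>(ii)\<close>
    and no_triple: "\<forall>d1 d2 d3. d1 \<noteq> d2 \<and> d1 \<noteq> d3 \<and> d2 \<noteq> d3 \<longrightarrow>
        carrier T C d1 \<inter> carrier T C d2 \<inter> carrier T C d3 = {}"
    \<comment> \<open>choice of d0: the root of its carrier is at maximum distance from r\<close>
    and d0_used: "d0 \<in> ran C"
    and d0_max: "\<forall>d\<in>ran C. depth T (carrier_root T C d) \<le> depth T (carrier_root T C d0)"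
    and rd0_def: "rd0 = carrier_root T C d0"
    and rd0_not_root: "rd0 \<noteq> root T"
    and Vbar_def: "Vbar = descendants T rd0"
    and Vhat_def: "Vhat = verts T - Vbar"
    and Tbar_def: "Tbar = \<lparr>verts = Vbar, par = par T, root = rd0\<rparr>"
    and d'_ne: "d' \<noteq> d0"
    and colors_bar: "{d. \<exists>v\<in>Vbar. C v = Some d} = {d0, d'}"
    and rd0_in: "rd0 \<in> carrier T C d0 \<inter> carrier T C d'"
    \<comment> \<open>C_min: minimum-cost convex coloring of Tbar with colours in {d0, d'}\<close>
    and Cmin_ok: "convex_total Tbar Cmin \<and> Cmin ` Vbar \<subseteq> {d0, d'}"
    and Cmin_min: "\<forall>C2. convex_total Tbar C2 \<and> C2 ` Vbar \<subseteq> {d0, d'} \<longrightarrow>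
        cost Tbar C w Cmin \<le> cost Tbar C w C2"
    \<comment> \<open>C_medium: minimum among those equal to C_high or colouring rd0 by d'\<close>
    and Cmed_ok: "convex_total Tbar Cmed \<and> Cmed ` Vbar \<subseteq> {d0, d'} \<and>
        ((\<forall>v\<in>Vbar. Cmed v = d0) \<or> Cmed rd0 = d')"
    and Cmed_min: "\<forall>C2. convex_total Tbar C2 \<and> C2 ` Vbar \<subseteq> {d0, d'} \<and>
          ((\<forall>v\<in>Vbar. C2 v = d0) \<or> C2 rd0 = d') \<longrightarrow>
        cost Tbar C w Cmed \<le> cost Tbar C w C2"
    \<comment> \<open>the reduced instance\<close>
    and v0_new: "v0 \<notin> verts T"
    and T'_def: "T' = \<lparr>verts = Vhat \<union> {rd0, v0}, par = (par T)(v0 := rd0), root = root T\<rparr>"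
    and w1_def: "w1 = (\<lambda>v. if v \<in> Vhat then w v
        else if v = rd0 then cost Tbar C w Cmed - cost Tbar C w Cmin
        else if v = v0 then cost Tbar C w (\<lambda>_. d0) - cost Tbar C w Cmin
        else 0)"
    and C'_def: "C' = (\<lambda>v. if v \<in> Vhat then C v
        else if v = rd0 then (if w1 rd0 > 0 then Some d0 else None)
        else if v = v0 then (if w1 v0 > 0 then Some d' else None)
        else None)"
  shows "OPT T' C' w1 = OPT T C w - cost Tbar C w Cmin"
proof -
  \<comment> \<open>Only two consequences of the choice of d0 are used: d0 occurs only in \<open>Vbar\<close>, and
    \<open>Vbar\<close> uses no colours besides d0 and d'.\<close>
  interpret rooted T using tree by (rule rooted.intro)
  have finite_Vbar: "finite Vbar" unfolding Vbar_def using finite_verts descendants_subset by (rule finite_subset[rotated])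
  have cost_Tbar: "cost Tbar C w X = cost_on C w Vbar X" for X
    using cost_eq_cost_on[of Tbar] finite_Vbar unfolding Tbar_def by simp
  have convex_Tbar: "convex_total Tbar X \<longleftrightarrow> convex_colouring (par T) Vbar X" for X
    unfolding convex_total_iff Tbar_def by simp
  have d0_below: "v \<in> Vbar" if "C v = Some d0" for v
    using coloured_below_carrier_root[of C v d0] that dom_C unfolding Vbar_def rd0_def by blast
  obtain a0 where "C a0 = Some d0" using d0_used unfolding ran_def by blast
  then have rd0_in_verts: "rd0 \<in> verts T" using d0_below ancestor_in_verts unfolding Vbar_def by blast
  have colours_below: "C v \<in> {None, Some d0, Some d'}" if "v \<in> Vbar" for v
    using colors_bar that by (cases "C v") auto
  interpret subtree_reduction T C w rd0 v0 d0 d' Cmin Cmed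
    by unfold_locales
      (use w_nonneg rd0_in_verts rd0_not_root v0_new d'_ne d0_below colours_below Cmin_ok Cmin_min Cmed_ok Cmed_min
        in \<open>simp_all add: Vbar_def convex_Tbar cost_Tbar\<close>)
  have "OPT T' C' w1 = OPT T C w - cost_on C w (descendants T rd0) Cmin"
    by (rule OPT_reduced)
      (use r_in_Vbar v0_ne_r v0_notin_verts in \<open>simp_all add: T'_def w1_def C'_def Vhat_def Vbar_def cost_Tbar\<close>)
  then show ?thesis by (simp add: cost_Tbar Vbar_def)
qed

end
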